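(* For every real $x\ge 1$, $$\frac{\log x}{\zeta(2)}+1-\frac{\log 2}{\zeta(2)}\;<\;\sum_{n\le x}\frac{\varphi(n)}{n^2}\;\le\;\frac{\log x}{\zeta(2)}+1 .$$
   Context: $\varphi$ is Euler's totient function, $\zeta$ is the Riemann zeta function, $\log$ is the natural logarithm, and the sum runs over positive integers $n\le x$. *)

theory Defs
  imports "HOL-Analysis.Analysis" "HOL-Number_Theory.Number_Theory"
begin

definition zeta2 :: real where
  "zeta2 = (\<Sum>n. 1 / (real (Suc n))^2)"

end

theory Submission
  imports Defs
begin

text \<open>
  Write S(N) for the sum. Counting the identity \<open>\<Sum>d | d dvd n. totient d = n\<close> by cofactors
  gives the Dirichlet identity \<open>harm N = (\<Sum>m=1..N. S (N div m) / m\<^sup>2)\<close>. The two bounds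
  are proved together by strong induction on N, the upper one in the sharper form
  \<open>S N \<le> 4/5 + ln N / \<zeta>(2)\<close> for \<open>N \<ge> 4\<close>. Inserting the induction hypotheses for the
  terms with \<open>m \<ge> 2\<close> into the identity bounds S(N) by \<open>ln N / \<zeta>(2) + \<kappa> N\<close>, corrected by
  multiples of \<open>\<zeta>\<^sub>N(2) - 1\<close>, where \<open>\<kappa> N = harm N - \<zeta>(2)\<^sup>-\<^sup>1 (\<Sum>m=1..N. ln (N/m) / m\<^sup>2)\<close>
  increases from N = 2 on, and by less than 0.0031 in total beyond N = 40. Knowing \<open>\<kappa> 40\<close> to lie in
  [1.135, 1.15] then closes the induction for N > 40; that fact and the cases \<open>N \<le> 40\<close> are
  verified by integer computations with outward rounding, bounding the logarithm by Pade
  approximants of \<open>ln (1 + 1/k)\<close>.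
\<close>

section \<open>Partial sums of \<zeta>(2)\<close>

lemma zeta2_sums: "(\<lambda>n. 1 / (real (Suc n))^2) sums zeta2"
proof -
  have "summable (\<lambda>n. 1 / (real (Suc n))^2)"
    using inverse_squares_sums by (simp add: sums_iff add.commute)
  then show ?thesis
    unfolding zeta2_def by (simp add: summable_sums)
qed

lemma zeta2_eq: "zeta2 = pi^2 / 6"
  using inverse_squares_sums unfolding zeta2_def by (simp add: sums_iff add.commute)

lemma zeta2_bounds: "1.6449 \<le> zeta2" "zeta2 \<le> 1.645"
proof -
  have pi: "3.141592653588 \<le> pi" "pi \<le> 3.1415926535899"
    by (rule pi_approx)+
  have "(3.141592653588::real)^2 \<le> pi^2"
    using pi(1) by (intro power_mono) auto
  then show "1.6449 \<le> zeta2"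
    unfolding zeta2_eq by (simp add: power2_eq_square)
  have "pi^2 \<le> (3.1415926535899::real)^2"
    using pi(2) by (intro power_mono) auto
  then show "zeta2 \<le> 1.645"
    unfolding zeta2_eq by (simp add: power2_eq_square)
qed

lemma zeta2_pos: "zeta2 > 0"
  using zeta2_bounds by simp

definition zeta2_partial :: "nat \<Rightarrow> real" where
  "zeta2_partial N = (\<Sum>n=1..N. 1 / (real n)^2)"

lemma zeta2_partial_Suc: "zeta2_partial (Suc n) = zeta2_partial n + 1 / (real n + 1)^2"
  unfolding zeta2_partial_def by (simp add: add.commute)

lemma zeta2_partial_nonneg: "0 \<le> zeta2_partial N"
  unfolding zeta2_partial_def by (intro sum_nonneg) auto

lemma zeta2_tail_sums: "(\<lambda>i. 1 / (real (i + N + 1))^2) sums (zeta2 - zeta2_partial N)"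
proof -
  have "zeta2_partial N = (\<Sum>i<N. 1 / (real (Suc i))^2)"
    unfolding zeta2_partial_def
    by (induction N) (auto simp: atLeastAtMostSuc_conv add.commute)
  with sums_split_initial_segment[OF zeta2_sums, of N] show ?thesis
    by simp
qed

lemma telescoping_inverse_sums:
  assumes "N \<ge> 1"
  shows "(\<lambda>i. 1 / real (i + N) - 1 / real (i + N + 1)) sums (1 / real N)"
proof -
  have "(\<lambda>i. 1 / real (i + N)) \<longlonglongrightarrow> 0"
    using LIMSEQ_ignore_initial_segment[OF lim_inverse_n', of N] by simp
  from telescope_sums'[OF this] show ?thesis
    by simp
qed

lemma zeta2_tail_le:
  assumes "N \<ge> 1"
  shows "zeta2 - zeta2_partial N \<le> 1 / real N"
proof (rule sums_le[OF _ zeta2_tail_sums telescoping_inverse_sums[OF assms]])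
  fix i
  have pos: "real (i + N) > 0"
    using assms by simp
  have "1 / (real (i + N + 1))^2 \<le> 1 / (real (i + N) * real (i + N + 1))"
    using pos by (intro divide_left_mono) (auto simp: power2_eq_square intro!: mult_right_mono)
  also have "\<dots> = 1 / real (i + N) - 1 / real (i + N + 1)"
    using pos by (simp add: field_simps)
  finally show "1 / (real (i + N + 1))^2 \<le> 1 / real (i + N) - 1 / real (i + N + 1)" .
qed

lemma zeta2_tail_ge: "1 / real (N + 1) \<le> zeta2 - zeta2_partial N"
proof (rule sums_le[OF _ telescoping_inverse_sums zeta2_tail_sums])
  fix i
  have "1 / real (i + (N + 1)) - 1 / real (i + (N + 1) + 1)
      = 1 / (real (i + N + 1) * real (i + N + 2))"
    by (simp add: field_simps)
  also have "\<dots> \<le> 1 / (real (i + N + 1))^2"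
    by (intro divide_left_mono) (auto simp: power2_eq_square intro!: mult_left_mono)
  finally show "1 / real (i + (N + 1)) - 1 / real (i + (N + 1) + 1) \<le> 1 / (real (i + N + 1))^2" .
qed simp

lemma zeta2_partial_le_zeta2: "zeta2_partial N \<le> zeta2"
proof -
  have "0 \<le> 1 / real (N + 1)"
    by simp
  with zeta2_tail_ge[of N] show ?thesis
    by linarith
qed

lemma inverse_squares_above_quarter:
  assumes "N \<ge> 4"
  shows "(\<Sum>m | m \<in> {2..N} \<and> N < 4 * m. 1 / (real m)^2) \<le> 4 / (real N - 3)"
proof -
  define k where "k = N div 4"
  have k: "k \<ge> 1" "real N - 3 \<le> 4 * real k"
    using assms unfolding k_def by linarith+
  have "(\<Sum>m | m \<in> {2..N} \<and> N < 4 * m. 1 / (real m)^2) \<le> (\<Sum>m=Suc k..N. 1 / (real m)^2)"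
    by (rule sum_mono2) (auto simp: k_def)
  also have "\<dots> = zeta2_partial N - zeta2_partial k"
    using div_le_dividend[of N 4] unfolding k_def[symmetric] zeta2_partial_def
    by (induction N rule: dec_induct) (simp_all add: atLeastAtMostSuc_conv)
  also have "\<dots> \<le> zeta2 - zeta2_partial k"
    using zeta2_partial_le_zeta2[of N] by simp
  also have "\<dots> \<le> 1 / real k"
    using zeta2_tail_le[OF k(1)] .
  also have "\<dots> \<le> 4 / (real N - 3)"
    using k assms by (simp add: field_simps)
  finally show ?thesis .
qed

section \<open>Increments of the logarithm\<close>

lemma ln_add_one_le_pade:
  fixes x :: real
  assumes "0 \<le> x"
  shows "ln (1 + x) \<le> x * (6 + x) / (6 + 4 * x)"
proof -
  define g where "g t = t * (6 + t) / (6 + 4 * t) - ln (1 + t)" for t :: real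
  have "g 0 \<le> g x"
  proof (rule DERIV_nonneg_imp_nondecreasing[OF assms])
    fix t :: real
    assume "0 \<le> t"
    have "DERIV g t :> ((6 + 2 * t) * (6 + 4 * t) - t * (6 + t) * 4) / (6 + 4 * t)^2 - 1 / (1 + t)"
      unfolding g_def using \<open>0 \<le> t\<close>
      by (auto intro!: derivative_eq_intros simp: power2_eq_square)
    also have "((6 + 2 * t) * (6 + 4 * t) - t * (6 + t) * 4) / (6 + 4 * t)^2 - 1 / (1 + t)
             = 4 * t^3 / ((6 + 4 * t)^2 * (1 + t))"
      using \<open>0 \<le> t\<close> by (simp add: field_simps) (simp add: algebra_simps power2_eq_square power3_eq_cube)
    finally have "DERIV g t :> 4 * t^3 / ((6 + 4 * t)^2 * (1 + t))" .
    moreover have "4 * t^3 / ((6 + 4 * t)^2 * (1 + t)) \<ge> 0"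
      using \<open>0 \<le> t\<close> by simp
    ultimately show "\<exists>y. DERIV g t :> y \<and> 0 \<le> y"
      by blast
  qed
  then show ?thesis
    by (simp add: g_def)
qed

lemma ln_add_one_ge_pade:
  fixes x :: real
  assumes "0 \<le> x"
  shows "3 * x * (2 + x) / (6 + 6 * x + x^2) \<le> ln (1 + x)"
proof -
  define h where "h t = ln (1 + t) - 3 * t * (2 + t) / (6 + 6 * t + t^2)" for t :: real
  have "h 0 \<le> h x"
  proof (rule DERIV_nonneg_imp_nondecreasing[OF assms])
    fix t :: real
    assume "0 \<le> t"
    have pos: "6 + 6 * t + t^2 > 0"
      using \<open>0 \<le> t\<close> by (simp add: add_pos_nonneg)
    have "DERIV h t :> 1 / (1 + t)
        - ((6 + 6 * t) * (6 + 6 * t + t^2) - 3 * t * (2 + t) * (6 + 2 * t)) / (6 + 6 * t + t^2)^2"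
      unfolding h_def using \<open>0 \<le> t\<close> pos
      by (auto intro!: derivative_eq_intros simp: field_simps power2_eq_square)
    also have "1 / (1 + t)
        - ((6 + 6 * t) * (6 + 6 * t + t^2) - 3 * t * (2 + t) * (6 + 2 * t)) / (6 + 6 * t + t^2)^2
        = t^4 / ((1 + t) * (6 + 6 * t + t^2)^2)"
      using \<open>0 \<le> t\<close> pos by (simp add: field_simps) (simp add: algebra_simps power2_eq_square power4_eq_xxxx)
    finally have "DERIV h t :> t^4 / ((1 + t) * (6 + 6 * t + t^2)^2)" .
    moreover have "t^4 / ((1 + t) * (6 + 6 * t + t^2)^2) \<ge> 0"
      using \<open>0 \<le> t\<close> by simp
    ultimately show "\<exists>y. DERIV h t :> y \<and> 0 \<le> y"
      by blast
  qed
  then show ?thesis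
    by (simp add: h_def)
qed

definition ln_step_upper :: "nat \<Rightarrow> real" where
  "ln_step_upper k = (6 * k + 1) / (k * (6 * k + 4))"

definition ln_step_lower :: "nat \<Rightarrow> real" where
  "ln_step_lower k = 3 * (2 * k + 1) / (6 * k^2 + 6 * k + 1)"

lemma ln_Suc_diff_eq:
  assumes "k \<ge> 1"
  shows "ln (real k + 1) - ln (real k) = ln (1 + 1 / real k)"
proof -
  have "1 + 1 / real k = (real k + 1) / real k"
    using assms by (simp add: field_simps)
  then show ?thesis
    using assms by (simp add: ln_div)
qed

lemma ln_Suc_diff_le:
  assumes "k \<ge> 1"
  shows "ln (real k + 1) - ln (real k) \<le> ln_step_upper k"
proof -
  have "(1 / real k) * (6 + 1 / real k) / (6 + 4 * (1 / real k)) = ln_step_upper k"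
    using assms by (simp add: ln_step_upper_def divide_simps)
  with ln_add_one_le_pade[of "1 / real k"] show ?thesis
    by (simp add: ln_Suc_diff_eq[OF assms])
qed

lemma ln_Suc_diff_ge:
  assumes "k \<ge> 1"
  shows "ln_step_lower k \<le> ln (real k + 1) - ln (real k)"
proof -
  have k: "real k > 0"
    using assms by simp
  have num: "3 * (1 / real k) * (2 + 1 / real k) = 3 * (2 * real k + 1) / (real k)^2"
    using k by (simp add: field_simps power2_eq_square)
  have den: "6 + 6 * (1 / real k) + (1 / real k)^2 = (6 * (real k)^2 + 6 * real k + 1) / (real k)^2"
    using k by (simp add: field_simps power2_eq_square)
  have "3 * (1 / real k) * (2 + 1 / real k) / (6 + 6 * (1 / real k) + (1 / real k)^2) = ln_step_lower k"
    unfolding num den ln_step_lower_def using k by simp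
  with ln_add_one_ge_pade[of "1 / real k"] show ?thesis
    by (simp add: ln_Suc_diff_eq[OF assms])
qed

lemma ln_step_lower_nonneg: "0 \<le> ln_step_lower k"
  by (simp add: ln_step_lower_def)

lemma ln2_bounds: "9 / 13 \<le> ln (2::real)" "ln (2::real) \<le> 7 / 10"
  using ln_Suc_diff_ge[of 1] ln_Suc_diff_le[of 1]
  by (simp_all add: ln_step_lower_def ln_step_upper_def)

lemma ln_Suc_diff_sum_bounds:
  assumes "1 \<le> a" "a \<le> b"
  shows "(\<Sum>k=a..b. ln_step_lower k) \<le> ln (real b + 1) - ln (real a)"
    and "ln (real b + 1) - ln (real a) \<le> (\<Sum>k=a..b. ln_step_upper k)"
  using assms(2)
proof (induction b rule: dec_induct)
  case base
  { case 1 show ?case using ln_Suc_diff_ge[OF assms(1)] by simp }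
  { case 2 show ?case using ln_Suc_diff_le[OF assms(1)] by simp }
next
  case (step b)
  have b: "1 \<le> Suc b"
    by simp
  { case 1 show ?case
      using step.hyps(1) step.IH(1) ln_Suc_diff_ge[OF b] by (simp add: add.commute) }
  { case 2 show ?case
      using step.hyps(1) step.IH(2) ln_Suc_diff_le[OF b] by (simp add: add.commute) }
qed

lemma ln_ratio_le_ln_Suc_div:
  assumes "1 \<le> m" "m \<le> N"
  shows "ln (real N / real m) \<le> ln (real (N div m) + 1)"
proof -
  have "N div m * m + N mod m = N"
    by (rule div_mult_mod_eq)
  moreover have "N mod m < m"
    using assms by simp
  ultimately have "N < (N div m + 1) * m"
    by (simp only: distrib_right mult_1_left)
  then have "real N < (real (N div m) + 1) * real m"
    by (metis of_nat_1 of_nat_add of_nat_less_iff of_nat_mult)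
  then have "real N / real m < real (N div m) + 1"
    using assms by (simp add: divide_less_eq)
  then show ?thesis
    using assms by (intro ln_mono) auto
qed

lemma ln_div_le_ln_ratio:
  assumes "1 \<le> m" "m \<le> N"
  shows "ln (real (N div m)) \<le> ln (real N / real m)"
proof -
  have "real (N div m) * real m \<le> real N"
    by (metis div_times_less_eq_dividend of_nat_le_iff of_nat_mult)
  moreover have "N div m \<ge> 1"
    using assms by (simp add: div_greater_zero_iff Suc_le_eq)
  ultimately show ?thesis
    using assms by (intro ln_mono) (auto simp: le_divide_eq)
qed

section \<open>The Dirichlet identity\<close>

definition totient_sum :: "nat \<Rightarrow> real" where
  "totient_sum N = (\<Sum>n=1..N. real (totient n) / (real n)^2)"

lemma totient_sum_eq_1_plus: "N \<ge> 1 \<Longrightarrow> totient_sum N = 1 + (\<Sum>k=2..N. real (totient k) / (real k)^2)"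
  unfolding totient_sum_def by (simp add: sum.atLeast_Suc_atMost numeral_2_eq_2)

lemma inverse_eq_sum_totient:
  assumes "n \<ge> 1"
  shows "inverse (real n) = (\<Sum>d | d dvd n. real (totient d) / (real n)^2)"
proof -
  have "real n = (\<Sum>d | d dvd n. real (totient d))"
    using totient_divisor_sum[of n] by (metis of_nat_sum)
  then have "(\<Sum>d | d dvd n. real (totient d) / (real n)^2) = real n / (real n)^2"
    by (simp add: sum_divide_distrib[symmetric])
  then show ?thesis
    using assms by (simp add: power2_eq_square inverse_eq_divide)
qed

lemma harm_eq_sum_totient_sum: "(harm N :: real) = (\<Sum>m=1..N. totient_sum (N div m) / (real m)^2)"
proof -
  have "(harm N :: real) = (\<Sum>n=1..N. \<Sum>d | d dvd n. real (totient d) / (real n)^2)"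
    unfolding harm_def by (intro sum.cong refl) (simp add: inverse_eq_sum_totient)
  also have "\<dots> = (\<Sum>(n, d)\<in>Sigma {1..N} (\<lambda>n. {d. d dvd n}). real (totient d) / (real n)^2)"
    by (intro sum.Sigma) auto
  also have "\<dots> = (\<Sum>(m, d)\<in>Sigma {1..N} (\<lambda>m. {1..N div m}). real (totient d) / (real d)^2 / (real m)^2)"
  proof (rule sum.reindex_bij_witness[where i = "\<lambda>(m, d). (d * m, d)" and j = "\<lambda>(n, d). (n div d, d)"])
    fix a
    assume "a \<in> Sigma {1..N} (\<lambda>n. {d. d dvd n})"
    then obtain n d where a: "a = (n, d)" and n: "1 \<le> n" "n \<le> N" and "d dvd n"
      by auto
    then obtain q where q: "n = d * q"
      by (auto elim: dvdE)
    with n have dq: "1 \<le> q" "1 \<le> d" "d * q \<le> N"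
      by (auto simp: Suc_le_eq)
    then have "q \<le> N"
      using le_trans[of q "d * q" N] by simp
    with dq show "(\<lambda>(m, d). (d * m, d)) ((\<lambda>(n, d). (n div d, d)) a) = a"
      and "(\<lambda>(n, d). (n div d, d)) a \<in> Sigma {1..N} (\<lambda>m. {1..N div m})"
      and "(\<lambda>(m, d). real (totient d) / (real d)^2 / (real m)^2) ((\<lambda>(n, d). (n div d, d)) a)
             = (\<lambda>(n, d). real (totient d) / (real n)^2) a"
      using a q by (auto simp: less_eq_div_iff_mult_less_eq mult.commute[of _ d] power_mult_distrib)
  next
    fix b
    assume "b \<in> Sigma {1..N} (\<lambda>m. {1..N div m})"
    then obtain m d where b: "b = (m, d)" "1 \<le> m" "1 \<le> d" "d * m \<le> N"
      by (auto simp: less_eq_div_iff_mult_less_eq)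
    then show "(\<lambda>(n, d). (n div d, d)) ((\<lambda>(m, d). (d * m, d)) b) = b"
      and "(\<lambda>(m, d). (d * m, d)) b \<in> Sigma {1..N} (\<lambda>n. {d. d dvd n})"
      by auto
  qed
  also have "\<dots> = (\<Sum>m=1..N. totient_sum (N div m) / (real m)^2)"
    unfolding totient_sum_def by (subst sum.Sigma[symmetric]) (auto simp: sum_divide_distrib)
  finally show ?thesis .
qed

lemma harm_eq_totient_sum_plus:
  assumes "N \<ge> 1"
  shows "harm N = totient_sum N + (\<Sum>m=2..N. totient_sum (N div m) / (real m)^2)"
  using harm_eq_sum_totient_sum[of N] assms by (simp add: sum.atLeast_Suc_atMost numeral_2_eq_2)

section \<open>The correction term \<kappa>\<close>

definition kappa :: "nat \<Rightarrow> real" where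
  "kappa N = harm N - (\<Sum>m=1..N. ln (real N / real m) / (real m)^2) / zeta2"

lemma kappa_Suc:
  "kappa (Suc n) = kappa n + 1 / (real n + 1) - zeta2_partial n * (ln (real n + 1) - ln (real n)) / zeta2"
proof (cases "n = 0")
  case True
  then show ?thesis
    by (simp add: kappa_def zeta2_partial_def harm_def)
next
  case False
  define A where "A = (\<Sum>m=1..n. ln (real n / real m) / (real m)^2)"
  define L where "L = ln (real n + 1) - ln (real n)"
  have "(\<Sum>m=1..Suc n. ln (real (Suc n) / real m) / (real m)^2)
      = (\<Sum>m=1..n. ln ((real n + 1) / real m) / (real m)^2)"
    by (simp add: add.commute)
  also have "\<dots> = (\<Sum>m=1..n. ln (real n / real m) / (real m)^2 + L * (1 / (real m)^2))"
    using False by (intro sum.cong refl) (simp add: L_def ln_div diff_divide_distrib)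
  also have "\<dots> = A + L * zeta2_partial n"
    by (simp add: A_def sum.distrib sum_distrib_left zeta2_partial_def)
  finally have "kappa (Suc n) = harm n + 1 / (real n + 1) - (A + L * zeta2_partial n) / zeta2"
    unfolding kappa_def by (simp add: harm_Suc inverse_eq_divide add.commute)
  also have "\<dots> = kappa n + 1 / (real n + 1) - zeta2_partial n * L / zeta2"
    unfolding kappa_def A_def by (simp add: add_divide_distrib algebra_simps)
  finally show ?thesis
    by (simp add: L_def)
qed

lemma kappa_1: "kappa 1 = 1"
  by (simp add: kappa_def harm_def)

lemma weighted_ln_ratio_sum:
  assumes "N \<ge> 1"
  shows "(\<Sum>m=2..N. (a + ln (real N / real m) / zeta2) / (real m)^2)
       = a * (zeta2_partial N - 1) + harm N - kappa N - ln (real N) / zeta2"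
proof -
  have split: "(\<Sum>m=1..N. f m) = f 1 + (\<Sum>m=2..N. f m)" for f :: "nat \<Rightarrow> real"
    using assms by (simp add: sum.atLeast_Suc_atMost numeral_2_eq_2)
  have "(\<Sum>m=2..N. (a + ln (real N / real m) / zeta2) / (real m)^2)
      = (\<Sum>m=2..N. a * (1 / (real m)^2) + ln (real N / real m) / (real m)^2 / zeta2)"
    by (intro sum.cong refl) (simp add: add_divide_distrib)
  also have "\<dots> = a * (\<Sum>m=2..N. 1 / (real m)^2) + (\<Sum>m=2..N. ln (real N / real m) / (real m)^2) / zeta2"
    by (simp add: sum.distrib sum_distrib_left sum_divide_distrib)
  also have "\<dots> = a * (zeta2_partial N - 1) + harm N - kappa N - ln (real N) / zeta2"
    using split[of "\<lambda>m. 1 / (real m)^2"] split[of "\<lambda>m. ln (real N / real m) / (real m)^2"]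
    by (simp add: zeta2_partial_def kappa_def add_divide_distrib)
  finally show ?thesis .
qed

lemma kappa_Suc_ge_of_enclosure:
  assumes "1 \<le> m" "zeta2_partial m \<le> t"
  shows "kappa m + 1 / (real m + 1) - t * ln_step_upper m / 1.6449 \<le> kappa (Suc m)"
proof -
  have L: "0 \<le> ln (real m + 1) - ln (real m)" "ln (real m + 1) - ln (real m) \<le> ln_step_upper m"
    using assms(1) ln_Suc_diff_le[OF assms(1)] by simp_all
  have "zeta2_partial m * (ln (real m + 1) - ln (real m)) \<le> t * ln_step_upper m"
    using assms(2) L zeta2_partial_nonneg[of m] by (intro mult_mono) auto
  moreover have "0 \<le> zeta2_partial m * (ln (real m + 1) - ln (real m))"
    using L(1) zeta2_partial_nonneg[of m] by simp
  ultimately have "zeta2_partial m * (ln (real m + 1) - ln (real m)) / zeta2 \<le> t * ln_step_upper m / 1.6449"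
    using zeta2_bounds by (intro frac_le) auto
  then show ?thesis
    using kappa_Suc[of m] by simp
qed

lemma kappa_Suc_le_of_enclosure:
  assumes "1 \<le> m" "0 \<le> t" "t \<le> zeta2_partial m"
  shows "kappa (Suc m) \<le> kappa m + 1 / (real m + 1) - t * ln_step_lower m / 1.645"
proof -
  have "t * ln_step_lower m \<le> zeta2_partial m * (ln (real m + 1) - ln (real m))"
    using assms ln_Suc_diff_ge[OF assms(1)] ln_step_lower_nonneg[of m] by (intro mult_mono) auto
  moreover have "0 \<le> t * ln_step_lower m"
    using assms(2) ln_step_lower_nonneg[of m] by simp
  ultimately have "t * ln_step_lower m / 1.645 \<le> zeta2_partial m * (ln (real m + 1) - ln (real m)) / zeta2"
    using zeta2_bounds by (intro frac_le) auto
  then show ?thesis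
    using kappa_Suc[of m] by simp
qed

lemma kappa_le_kappa_Suc:
  assumes "n \<ge> 2"
  shows "kappa n \<le> kappa (Suc n)"
proof -
  define x where "x = real n"
  have x: "x \<ge> 2"
    using assms by (simp add: x_def)
  have T: "zeta2_partial n \<le> zeta2 - 1 / (x + 1)"
    using zeta2_tail_ge[of n] by (simp add: x_def add.commute)
  have "ln (x + 1) - ln x \<le> 1 * (inverse x + inverse (x + 1)) / 2"
    using x by (intro ln_inverse_approx_le) auto
  also have "\<dots> = (2 * x + 1) / (2 * x * (x + 1))"
    using x by (simp add: field_simps)
  finally have L: "ln (real n + 1) - ln (real n) \<le> (2 * x + 1) / (2 * x * (x + 1))"
    by (simp add: x_def)
  have "zeta2_partial n * (ln (real n + 1) - ln (real n))
      \<le> (zeta2 - 1 / (x + 1)) * ((2 * x + 1) / (2 * x * (x + 1)))"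
    using T L zeta2_partial_nonneg[of n] assms by (intro mult_mono) auto
  also have "\<dots> = (zeta2 * (x + 1) - 1) * (2 * x + 1) / (2 * x * (x + 1) * (x + 1))"
    using x by (simp add: field_simps)
  also have "\<dots> \<le> 2 * x * (x + 1) * zeta2 / (2 * x * (x + 1) * (x + 1))"
  proof (rule divide_right_mono)
    have "zeta2 * (x + 1) \<le> 1.645 * (x + 1)"
      using zeta2_bounds x by (intro mult_right_mono) auto
    then show "(zeta2 * (x + 1) - 1) * (2 * x + 1) \<le> 2 * x * (x + 1) * zeta2"
      using x by (simp add: algebra_simps)
  qed (use x in auto)
  also have "\<dots> = zeta2 / (x + 1)"
    using x by simp
  finally have "zeta2_partial n * (ln (real n + 1) - ln (real n)) / zeta2 \<le> 1 / (x + 1)"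
    using zeta2_pos by (simp add: divide_le_eq)
  then show ?thesis
    using kappa_Suc[of n] by (simp add: x_def)
qed

lemma kappa_Suc_le_telescoping:
  assumes "n \<ge> 40"
  shows "kappa (Suc n) \<le> kappa n + 61 / 500 / real n - 61 / 500 / real (Suc n)"
proof -
  define x where "x = real n"
  have x: "x \<ge> 40"
    using assms by (simp add: x_def)
  have T: "zeta2 - 1 / x \<le> zeta2_partial n"
    using zeta2_tail_le[of n] assms by (simp add: x_def)
  have "2 * (x + 1 - x) / (x + (x + 1)) \<le> ln (x + 1) - ln x"
    using x by (intro ln_inverse_approx_ge) auto
  then have L: "2 / (2 * x + 1) \<le> ln (real n + 1) - ln (real n)"
    by (simp add: x_def add.commute)
  have "1 / x \<le> 1"
    using x by simp
  then have "(zeta2 - 1 / x) * (2 / (2 * x + 1)) \<le> zeta2_partial n * (ln (real n + 1) - ln (real n))"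
    using T L zeta2_bounds zeta2_partial_nonneg[of n] x by (intro mult_mono) auto
  also have "(zeta2 - 1 / x) * (2 / (2 * x + 1)) = 2 * (zeta2 * x - 1) / (x * (2 * x + 1))"
    using x by (simp add: field_simps)
  finally have TL: "2 * (zeta2 * x - 1) / (x * (2 * x + 1)) \<le> zeta2_partial n * (ln (real n + 1) - ln (real n))" .
  have "1000 * (x + 1) \<le> 1.6449 * (622 * x + 61)"
    using x by simp
  also have "\<dots> \<le> zeta2 * (622 * x + 61)"
    using zeta2_bounds x by (intro mult_right_mono) auto
  finally have "0 \<le> x * (zeta2 * (622 * x + 61) - 1000 * (x + 1))"
    using x by simp
  also have "\<dots> = 2 * (zeta2 * x - 1) * (500 * x * (x + 1)) - zeta2 * (500 * x - 61) * (x * (2 * x + 1))"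
    by (simp add: algebra_simps)
  finally have "zeta2 * (500 * x - 61) / (500 * x * (x + 1)) \<le> 2 * (zeta2 * x - 1) / (x * (2 * x + 1))"
    using x by (simp add: frac_le_eq divide_nonpos_pos)
  with TL have "zeta2 * (500 * x - 61) / (500 * x * (x + 1)) \<le> zeta2_partial n * (ln (real n + 1) - ln (real n))"
    by linarith
  then have "(500 * x - 61) / (500 * x * (x + 1)) \<le> zeta2_partial n * (ln (real n + 1) - ln (real n)) / zeta2"
    using zeta2_pos by (simp add: pos_le_divide_eq mult.commute)
  moreover have "(500 * x - 61) / (500 * x * (x + 1)) = 1 / (x + 1) + 61 / 500 / (x + 1) - 61 / 500 / x"
    using x by (simp add: divide_simps) (simp add: algebra_simps)
  ultimately have "kappa (Suc n) \<le> kappa n + 61 / 500 / x - 61 / 500 / (x + 1)"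
    using kappa_Suc[of n] unfolding x_def by linarith
  then show ?thesis
    by (simp add: x_def add.commute)
qed

lemma kappa_bounds_beyond_40:
  assumes "N \<ge> 40"
  shows "kappa 40 \<le> kappa N" "kappa N \<le> kappa 40 + 61 / 20000 - 61 / 500 / real N"
  using assms
proof (induction N rule: dec_induct)
  case (step n)
  { case 1 show ?case
      using step kappa_le_kappa_Suc[of n] by simp }
  { case 2 show ?case
      using step kappa_Suc_le_telescoping[OF step(1)] by linarith }
qed simp_all

section \<open>The induction step\<close>

definition totient_sum_lower_bound :: "nat \<Rightarrow> bool" where
  "totient_sum_lower_bound M \<longleftrightarrow> 1 + (ln (real M + 1) - ln 2) / zeta2 \<le> totient_sum M"

definition totient_sum_upper_bound :: "nat \<Rightarrow> bool" where
  "totient_sum_upper_bound M \<longleftrightarrow> totient_sum M \<le> (if 4 \<le> M then 4 / 5 else 1) + ln (real M) / zeta2"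

lemma totient_sum_le_of_lower_bounds:
  assumes "N \<ge> 2" and lower: "\<And>M. 1 \<le> M \<Longrightarrow> M < N \<Longrightarrow> totient_sum_lower_bound M"
  shows "totient_sum N \<le> ln (real N) / zeta2 + kappa N - (1 - ln 2 / zeta2) * (zeta2_partial N - 1)"
proof -
  have "(1 - ln 2 / zeta2 + ln (real N / real m) / zeta2) / (real m)^2 \<le> totient_sum (N div m) / (real m)^2"
    if m: "m \<in> {2..N}" for m
  proof (rule divide_right_mono)
    have "1 \<le> N div m" "N div m < N"
      using m by (auto simp: div_greater_zero_iff Suc_le_eq)
    then have "1 + (ln (real (N div m) + 1) - ln 2) / zeta2 \<le> totient_sum (N div m)"
      using lower unfolding totient_sum_lower_bound_def by blast
    moreover have "ln (real N / real m) / zeta2 \<le> ln (real (N div m) + 1) / zeta2"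
      using m zeta2_pos ln_ratio_le_ln_Suc_div[of m N] by (intro divide_right_mono) auto
    ultimately show "1 - ln 2 / zeta2 + ln (real N / real m) / zeta2 \<le> totient_sum (N div m)"
      by (simp add: diff_divide_distrib)
  qed simp
  then have "(\<Sum>m=2..N. (1 - ln 2 / zeta2 + ln (real N / real m) / zeta2) / (real m)^2)
      \<le> (\<Sum>m=2..N. totient_sum (N div m) / (real m)^2)"
    by (rule sum_mono)
  then show ?thesis
    using weighted_ln_ratio_sum[of N "1 - ln 2 / zeta2"] harm_eq_totient_sum_plus[of N] assms(1)
    by simp
qed

lemma totient_sum_ge_of_upper_bounds:
  assumes "N \<ge> 4" and upper: "\<And>M. 1 \<le> M \<Longrightarrow> M < N \<Longrightarrow> totient_sum_upper_bound M"
  shows "ln (real N) / zeta2 + kappa N - 4 / 5 * (zeta2_partial N - 1) - 4 / (real N - 3) / 5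
           \<le> totient_sum N"
proof -
  define e where "e m = (if N < 4 * m then 1 / (real m)^2 / 5 else 0)" for m
  have "totient_sum (N div m) / (real m)^2 \<le> (4 / 5 + ln (real N / real m) / zeta2) / (real m)^2 + e m"
    if m: "m \<in> {2..N}" for m
  proof -
    have M: "1 \<le> N div m" "N div m < N"
      using m by (auto simp: div_greater_zero_iff Suc_le_eq)
    have "ln (real (N div m)) / zeta2 \<le> ln (real N / real m) / zeta2"
      using m zeta2_pos ln_div_le_ln_ratio[of m N] by (intro divide_right_mono) auto
    moreover have "4 \<le> N div m" if "4 * m \<le> N"
      using that m by (simp add: less_eq_div_iff_mult_less_eq)
    ultimately have "totient_sum (N div m) \<le> 4 / 5 + ln (real N / real m) / zeta2 + (if N < 4 * m then 1 / 5 else 0)"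
      using upper[OF M] unfolding totient_sum_upper_bound_def by (auto split: if_splits)
    then have "totient_sum (N div m) / (real m)^2
        \<le> (4 / 5 + ln (real N / real m) / zeta2 + (if N < 4 * m then 1 / 5 else 0)) / (real m)^2"
      by (rule divide_right_mono) simp
    then show ?thesis
      unfolding e_def by (simp add: add_divide_distrib split: if_splits)
  qed
  then have "(\<Sum>m=2..N. totient_sum (N div m) / (real m)^2)
      \<le> (\<Sum>m=2..N. (4 / 5 + ln (real N / real m) / zeta2) / (real m)^2) + (\<Sum>m=2..N. e m)"
    by (subst sum.distrib[symmetric]) (rule sum_mono)
  moreover have "(\<Sum>m=2..N. e m) = (\<Sum>m | m \<in> {2..N} \<and> N < 4 * m. 1 / (real m)^2) / 5"
    unfolding e_def by (simp add: sum.inter_filter[symmetric] sum_divide_distrib)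
  moreover have "\<dots> \<le> 4 / (real N - 3) / 5"
    using inverse_squares_above_quarter[OF assms(1)] by (rule divide_right_mono) simp
  ultimately show ?thesis
    using weighted_ln_ratio_sum[of N "4 / 5"] harm_eq_totient_sum_plus[of N] assms(1)
    by simp
qed

section \<open>Certified computations\<close>

text \<open>
  Integers stand for reals scaled by \<open>10\<^sup>6\<close>. Since \<open>div\<close> rounds towards \<open>-\<infinity>\<close>,
  \<open>a div b\<close> is a lower and \<open>- (- a div b)\<close> an upper bound for \<open>a / b\<close>, so each certificate
  yields a rigorous one-sided bound while \<open>code_simp\<close> only has to evaluate integer arithmetic.
\<close>

fun prefix_sums_nonneg :: "'a::ordered_ab_group_add \<Rightarrow> 'a list \<Rightarrow> bool" where
  "prefix_sums_nonneg s [] = True"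
| "prefix_sums_nonneg s (x # xs) \<longleftrightarrow> 0 \<le> s + x \<and> prefix_sums_nonneg (s + x) xs"

lemma prefix_sums_nonneg_sum:
  assumes "prefix_sums_nonneg s (map f [a..<b])" "a \<le> n" "n < b"
  shows "0 \<le> s + (\<Sum>k=a..n. f k)"
  using assms
proof (induction "n - a" arbitrary: a s)
  case 0
  then have "n = a"
    by simp
  with 0 show ?case
    by (simp add: upt_conv_Cons)
next
  case (Suc d)
  then have "prefix_sums_nonneg (s + f a) (map f [Suc a..<b])" "a < n" "d = n - Suc a"
    by (simp_all add: upt_conv_Cons)
  with Suc.hyps(1) Suc.prems have "0 \<le> s + f a + (\<Sum>k=Suc a..n. f k)"
    by simp
  with \<open>a < n\<close> show ?case
    by (simp add: sum.atLeast_Suc_atMost add.assoc)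
qed

lemma nonneg_sum_of_scaled_certificate:
  assumes "prefix_sums_nonneg 0 (map g [a..<b])"
    and "\<And>k. a \<le> k \<Longrightarrow> k < b \<Longrightarrow> real_of_int (g k) \<le> 10^6 * f k"
    and "a \<le> n" "n < b"
  shows "0 \<le> (\<Sum>k=a..n. f k)"
proof -
  have "0 \<le> (\<Sum>k=a..n. real_of_int (g k))"
    using prefix_sums_nonneg_sum[OF assms(1,3,4)] by (simp flip: of_int_sum)
  also have "\<dots> \<le> (\<Sum>k=a..n. 10^6 * f k)"
    using assms(2,4) by (intro sum_mono) auto
  finally show ?thesis
    by (simp flip: sum_distrib_left)
qed

definition lower_margin :: "nat \<Rightarrow> real" where
  "lower_margin k = 1.6449 * real (totient k) / (real k)^2 - ln_step_upper k"

definition lower_margin_scaled :: "nat \<Rightarrow> int" where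
  "lower_margin_scaled k = 100 * (16449 * int (totient k) * (6 * int k + 4) - 10000 * int k * (6 * int k + 1))
     div (int k ^ 2 * (6 * int k + 4))"

lemma lower_margin_scaled_le:
  assumes "k \<ge> 1"
  shows "real_of_int (lower_margin_scaled k) \<le> 10^6 * lower_margin k"
proof -
  have "real_of_int (lower_margin_scaled k)
      \<le> real_of_int (100 * (16449 * int (totient k) * (6 * int k + 4) - 10000 * int k * (6 * int k + 1)))
         / real_of_int (int k ^ 2 * (6 * int k + 4))"
    unfolding lower_margin_scaled_def by (rule real_of_int_div4)
  also have "\<dots> = 10^6 * lower_margin k"
    using assms unfolding lower_margin_def
    by (simp add: ln_step_upper_def divide_simps) (simp add: algebra_simps power2_eq_square)
  finally show ?thesis .
qed

lemma lower_margin_certificate: "prefix_sums_nonneg 0 (map lower_margin_scaled [2..<41])"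
  unfolding lower_margin_scaled_def by code_simp

lemma totient_sum_lower_bound_upto_40:
  assumes "1 \<le> N" "N \<le> 40"
  shows "totient_sum_lower_bound N"
proof (cases "N = 1")
  case True
  then show ?thesis
    by (simp add: totient_sum_lower_bound_def totient_sum_def)
next
  case False
  then have N: "2 \<le> N" "N < 41"
    using assms by auto
  have "0 \<le> (\<Sum>k=2..N. lower_margin k)"
    using lower_margin_scaled_le by (intro nonneg_sum_of_scaled_certificate[OF lower_margin_certificate _ N]) simp
  also have "\<dots> = 1.6449 * (totient_sum N - 1) - (\<Sum>k=2..N. ln_step_upper k)"
    using totient_sum_eq_1_plus[of N] N
    by (simp add: lower_margin_def sum_subtractf sum_distrib_left sum_divide_distrib)
  finally have "(\<Sum>k=2..N. ln_step_upper k) \<le> 1.6449 * (totient_sum N - 1)"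
    by simp
  moreover have "ln (real N + 1) - ln 2 \<le> (\<Sum>k=2..N. ln_step_upper k)"
    using ln_Suc_diff_sum_bounds(2)[of 2 N] N by simp
  ultimately have "(ln (real N + 1) - ln 2) / 1.6449 \<le> totient_sum N - 1"
    by (simp add: divide_le_eq mult.commute)
  moreover have "(ln (real N + 1) - ln 2) / zeta2 \<le> (ln (real N + 1) - ln 2) / 1.6449"
    using N zeta2_bounds by (intro divide_left_mono) auto
  ultimately show ?thesis
    unfolding totient_sum_lower_bound_def by linarith
qed

text \<open>The term at \<open>k = 3\<close> lowers the constant of the upper bound from 1 to 4/5 for \<open>N \<ge> 4\<close>.\<close>

definition upper_margin :: "nat \<Rightarrow> real" where
  "upper_margin k = ln_step_lower k / 1.645 - real (totient (k + 1)) / (real k + 1)^2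
                    - (if k = 3 then 1 / 5 else 0)"

definition upper_margin_scaled :: "nat \<Rightarrow> int" where
  "upper_margin_scaled k = 1000000 * (3000 * (2 * int k + 1) * (int k + 1)^2
       - 1645 * int (totient (k + 1)) * (6 * int k^2 + 6 * int k + 1)
       - (if k = 3 then 329 * (6 * int k^2 + 6 * int k + 1) * (int k + 1)^2 else 0))
     div (1645 * (6 * int k^2 + 6 * int k + 1) * (int k + 1)^2)"

lemma upper_margin_scaled_le:
  assumes "k \<ge> 1"
  shows "real_of_int (upper_margin_scaled k) \<le> 10^6 * upper_margin k"
proof -
  have "real_of_int (upper_margin_scaled k)
      \<le> real_of_int (1000000 * (3000 * (2 * int k + 1) * (int k + 1)^2
             - 1645 * int (totient (k + 1)) * (6 * int k^2 + 6 * int k + 1)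
             - (if k = 3 then 329 * (6 * int k^2 + 6 * int k + 1) * (int k + 1)^2 else 0)))
         / real_of_int (1645 * (6 * int k^2 + 6 * int k + 1) * (int k + 1)^2)"
    unfolding upper_margin_scaled_def by (rule real_of_int_div4)
  also have "\<dots> = 10^6 * upper_margin k"
  proof -
    have "0 \<le> 6 * (real k)^2 + 6 * real k"
      by simp
    then have "6 * (real k)^2 + 6 * real k + 1 > 0" "real k + 1 > 0"
      by linarith+
    then show ?thesis
      unfolding upper_margin_def
      by (cases "k = 3") (simp_all add: ln_step_lower_def divide_simps,
          simp_all add: algebra_simps power2_eq_square)
  qed
  finally show ?thesis .
qed

lemma upper_margin_certificate: "prefix_sums_nonneg 0 (map upper_margin_scaled [1..<40])"
  unfolding upper_margin_scaled_def by code_simp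

lemma totient_sum_upper_bound_upto_40:
  assumes "1 \<le> N" "N \<le> 40"
  shows "totient_sum_upper_bound N"
proof (cases "N = 1")
  case True
  then show ?thesis
    by (simp add: totient_sum_upper_bound_def totient_sum_def)
next
  case False
  define n where "n = N - 1"
  have n: "1 \<le> n" "n < 40" and N: "N = n + 1"
    using assms False by (auto simp: n_def)
  have "0 \<le> (\<Sum>k=1..n. upper_margin k)"
    using upper_margin_scaled_le by (intro nonneg_sum_of_scaled_certificate[OF upper_margin_certificate _ n]) simp
  also have "\<dots> = (\<Sum>k=1..n. ln_step_lower k) / 1.645 - (totient_sum N - 1) - (if 4 \<le> N then 1 / 5 else 0)"
  proof -
    have "(\<Sum>k=2..N. real (totient k) / (real k)^2)
        = (\<Sum>k=1..n. real (totient (Suc k)) / (real (Suc k))^2)"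
      unfolding N using sum.shift_bounds_cl_Suc_ivl[of "\<lambda>k. real (totient k) / (real k)^2" 1 n]
      by (simp add: numeral_2_eq_2)
    then have "(\<Sum>k=1..n. real (totient (k + 1)) / (real k + 1)^2) = totient_sum N - 1"
      using totient_sum_eq_1_plus[of N] N by (simp add: add.commute)
    moreover have "(\<Sum>k=1..n. (if k = 3 then 1 / 5 else 0 :: real)) = (if 4 \<le> N then 1 / 5 else 0)"
      using N by (simp add: sum.delta)
    ultimately show ?thesis
      unfolding upper_margin_def by (simp only: sum_subtractf sum_divide_distrib[symmetric])
  qed
  finally have "totient_sum N \<le> (if 4 \<le> N then 4 / 5 else 1) + (\<Sum>k=1..n. ln_step_lower k) / 1.645"
    by (simp split: if_splits)
  moreover have "(\<Sum>k=1..n. ln_step_lower k) \<le> ln (real N)"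
    using ln_Suc_diff_sum_bounds(1)[of 1 n] n N by (simp add: add.commute)
  then have "(\<Sum>k=1..n. ln_step_lower k) / 1.645 \<le> ln (real N) / zeta2"
    using zeta2_bounds zeta2_pos sum_nonneg[of "{1..n}" ln_step_lower] ln_step_lower_nonneg
    by (intro frac_le) auto
  ultimately show ?thesis
    unfolding totient_sum_upper_bound_def by linarith
qed

lemma real_of_int_neg_div_neg_ge: "real_of_int a / real_of_int b \<le> real_of_int (- (- a div b))"
proof -
  have "real_of_int (- a div b) \<le> - (real_of_int a / real_of_int b)"
    using real_of_int_div4[of "- a" b] by (simp only: of_int_minus minus_divide_left)
  then show ?thesis
    by (simp only: of_int_minus)
qed

lemma zeta2_partial_enclosure_step:
  fixes a b :: int
  assumes "0 \<le> a" "a \<le> 10^6 * zeta2_partial m" "10^6 * zeta2_partial m \<le> b"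
  shows "0 \<le> a + 1000000 div (int m + 1)^2"
    and "a + 1000000 div (int m + 1)^2 \<le> 10^6 * zeta2_partial (Suc m)"
    and "10^6 * zeta2_partial (Suc m) \<le> b - (- 1000000) div (int m + 1)^2"
proof -
  have cast: "real_of_int ((int m + 1)^2) = (real m + 1)^2"
    by simp
  show "0 \<le> a + 1000000 div (int m + 1)^2"
    using assms(1) by (simp add: pos_imp_zdiv_nonneg_iff)
  show "a + 1000000 div (int m + 1)^2 \<le> 10^6 * zeta2_partial (Suc m)"
    using assms(2) real_of_int_div4[of 1000000 "(int m + 1)^2"]
    unfolding zeta2_partial_Suc cast by (simp add: algebra_simps)
  show "10^6 * zeta2_partial (Suc m) \<le> b - (- 1000000) div (int m + 1)^2"
    using assms(3) real_of_int_neg_div_neg_ge[of 1000000 "(int m + 1)^2"]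
    unfolding zeta2_partial_Suc cast by (simp add: algebra_simps)
qed

lemma kappa_enclosure_step:
  fixes a b c d :: int
  assumes m: "1 \<le> m"
    and T: "0 \<le> a" "a \<le> 10^6 * zeta2_partial m" "10^6 * zeta2_partial m \<le> b"
    and K: "c \<le> 10^6 * kappa m" "10^6 * kappa m \<le> d"
  shows "c + 1000000 div (int m + 1) + (- (10000 * b * (6 * int m + 1))) div (16449 * int m * (6 * int m + 4))
           \<le> 10^6 * kappa (Suc m)"
    and "10^6 * kappa (Suc m)
           \<le> d - (- 1000000) div (int m + 1) - 1000 * a * (6 * int m + 3) div (1645 * (6 * int m^2 + 6 * int m + 1))"
proof -
  have step1: "real_of_int (1000000 div (int m + 1)) \<le> 10^6 / (real m + 1)"
    using real_of_int_div4[of 1000000 "int m + 1"] by simp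
  have step2: "10^6 / (real m + 1) \<le> real_of_int (- (- 1000000 div (int m + 1)))"
    using real_of_int_neg_div_neg_ge[of 1000000 "int m + 1"] by simp
  have "real_of_int ((- (10000 * b * (6 * int m + 1))) div (16449 * int m * (6 * int m + 4)))
      \<le> - (10000 * b * (6 * real m + 1)) / (16449 * real m * (6 * real m + 4))"
    using real_of_int_div4[of "- (10000 * b * (6 * int m + 1))" "16449 * int m * (6 * int m + 4)"] by simp
  also have "\<dots> = - (10^6 * ((b / 10^6) * ln_step_upper m / 1.6449))"
    using m by (simp add: ln_step_upper_def divide_simps)
  finally have "c + 1000000 div (int m + 1) + (- (10000 * b * (6 * int m + 1))) div (16449 * int m * (6 * int m + 4))
      \<le> 10^6 * (kappa m + 1 / (real m + 1) - (b / 10^6) * ln_step_upper m / 1.6449)"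
    using K(1) step1 by (simp add: algebra_simps)
  also have "\<dots> \<le> 10^6 * kappa (Suc m)"
    using kappa_Suc_ge_of_enclosure[OF m, of "b / 10^6"] T(3) by simp
  finally show "c + 1000000 div (int m + 1) + (- (10000 * b * (6 * int m + 1))) div (16449 * int m * (6 * int m + 4))
      \<le> 10^6 * kappa (Suc m)" .
  have "real_of_int (1000 * a * (6 * int m + 3) div (1645 * (6 * int m^2 + 6 * int m + 1)))
      \<le> 1000 * a * (6 * real m + 3) / (1645 * (6 * (real m)^2 + 6 * real m + 1))"
    using real_of_int_div4[of "1000 * a * (6 * int m + 3)" "1645 * (6 * int m^2 + 6 * int m + 1)"] by simp
  also have "\<dots> = 10^6 * ((a / 10^6) * ln_step_lower m / 1.645)"
    by (simp add: ln_step_lower_def divide_simps)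
  finally have upper: "10^6 * (kappa m + 1 / (real m + 1) - (a / 10^6) * ln_step_lower m / 1.645)
      \<le> d - (- 1000000) div (int m + 1) - 1000 * a * (6 * int m + 3) div (1645 * (6 * int m^2 + 6 * int m + 1))"
    using K(2) step2 by (simp add: algebra_simps)
  have "10^6 * kappa (Suc m) \<le> 10^6 * (kappa m + 1 / (real m + 1) - (a / 10^6) * ln_step_lower m / 1.645)"
    using kappa_Suc_le_of_enclosure[OF m, of "a / 10^6"] T(1,2) by simp
  also note upper
  finally show "10^6 * kappa (Suc m)
      \<le> d - (- 1000000) div (int m + 1) - 1000 * a * (6 * int m + 3) div (1645 * (6 * int m^2 + 6 * int m + 1))" .
qed

fun kappa_enclosure :: "nat \<Rightarrow> int \<times> int \<times> int \<times> int" where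
  "kappa_enclosure 0 = (1000000, 1000000, 1000000, 1000000)"
| "kappa_enclosure (Suc n) = (case kappa_enclosure n of (tlo, thi, klo, khi) \<Rightarrow> let m = int (Suc n) in
     (tlo + 1000000 div (m + 1)^2,
      thi - (- 1000000) div (m + 1)^2,
      klo + 1000000 div (m + 1) + (- (10000 * thi * (6 * m + 1))) div (16449 * m * (6 * m + 4)),
      khi - (- 1000000) div (m + 1) - 1000 * tlo * (6 * m + 3) div (1645 * (6 * m^2 + 6 * m + 1))))"

lemma kappa_enclosure_sound:
  assumes "kappa_enclosure n = (tlo, thi, klo, khi)"
  shows "0 \<le> tlo \<and> tlo \<le> 10^6 * zeta2_partial (Suc n) \<and> 10^6 * zeta2_partial (Suc n) \<le> thi
       \<and> klo \<le> 10^6 * kappa (Suc n) \<and> 10^6 * kappa (Suc n) \<le> khi"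
  using assms
proof (induction n arbitrary: tlo thi klo khi)
  case 0
  then show ?case
    using kappa_1 by (simp add: zeta2_partial_def)
next
  case (Suc n)
  obtain a b c d where prev: "kappa_enclosure n = (a, b, c, d)"
    by (metis prod_cases4)
  note IH = Suc.IH[OF prev]
  have m: "1 \<le> Suc n"
    by simp
  show ?case
    using Suc.prems prev zeta2_partial_enclosure_step[of a "Suc n" b] IH
      kappa_enclosure_step[OF m, of a b c d]
    by (simp add: Let_def)
qed

lemma kappa_enclosure_certificate:
  "case kappa_enclosure 39 of (_, _, klo, khi) \<Rightarrow> 1135000 \<le> klo \<and> khi \<le> 1150000"
  by code_simp

lemma kappa_40_bounds: "1.135 \<le> kappa 40" "kappa 40 \<le> 1.15"
proof -
  obtain tlo thi klo khi where e: "kappa_enclosure 39 = (tlo, thi, klo, khi)"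
    by (metis prod_cases4)
  with kappa_enclosure_certificate have "1135000 \<le> klo" "khi \<le> 1150000"
    by simp_all
  with kappa_enclosure_sound[OF e] show "1.135 \<le> kappa 40" "kappa 40 \<le> 1.15"
    by simp_all
qed

lemma ln2_div_zeta2_bounds: "9000 / 21385 \<le> ln 2 / zeta2" "ln 2 / zeta2 \<le> 7000 / 16449"
proof -
  have "(9 / 13) / (1645 / 1000) \<le> ln 2 / zeta2" "ln 2 / zeta2 \<le> (7 / 10) / (16449 / 10000)"
    by (rule frac_le; use ln2_bounds zeta2_bounds in simp)+
  then show "9000 / 21385 \<le> ln 2 / zeta2" "ln 2 / zeta2 \<le> 7000 / 16449"
    by simp_all
qed

lemma kappa_zeta2_partial_bounds_beyond_40:
  assumes N: "N \<ge> 41"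
  shows "1135 / 1000 \<le> kappa N" "kappa N \<le> 115 / 100 + 61 / 20000"
    and "16449 / 10000 - 1 / 41 \<le> zeta2_partial N" "zeta2_partial N \<le> 1645 / 1000"
proof -
  have N40: "N \<ge> 40"
    using N by simp
  have "0 \<le> 61 / 500 / real N"
    by simp
  with kappa_bounds_beyond_40[OF N40] have "kappa 40 \<le> kappa N" "kappa N \<le> kappa 40 + 61 / 20000"
    by linarith+
  then show "1135 / 1000 \<le> kappa N" "kappa N \<le> 115 / 100 + 61 / 20000"
    using kappa_40_bounds by simp_all
  have "zeta2 - zeta2_partial N \<le> 1 / real N"
    using zeta2_tail_le N by simp
  also have "\<dots> \<le> 1 / 41"
    using N by (simp add: divide_simps)
  finally show "16449 / 10000 - 1 / 41 \<le> zeta2_partial N"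
    using zeta2_bounds by simp
  show "zeta2_partial N \<le> 1645 / 1000"
    using zeta2_partial_le_zeta2[of N] zeta2_bounds by simp
qed

lemma totient_sum_upper_bound_beyond_40:
  assumes N: "N \<ge> 41" and lower: "\<And>M. 1 \<le> M \<Longrightarrow> M < N \<Longrightarrow> totient_sum_lower_bound M"
  shows "totient_sum_upper_bound N"
proof -
  note bounds = kappa_zeta2_partial_bounds_beyond_40[OF N]
  have b: "5744 / 10000 \<le> 1 - ln 2 / zeta2"
    using ln2_div_zeta2_bounds(2) by linarith
  have t: "6205 / 10000 \<le> zeta2_partial N - 1"
    using bounds(3) by linarith
  have "5744 / 10000 * (6205 / 10000) \<le> (1 - ln 2 / zeta2) * (zeta2_partial N - 1)"
    by (rule mult_mono[OF b t]) (use b in linarith, simp)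
  then have "3564152 / 10000000 \<le> (1 - ln 2 / zeta2) * (zeta2_partial N - 1)"
    by simp
  with totient_sum_le_of_lower_bounds[of N] lower N bounds(2)
  have "totient_sum N \<le> 4 / 5 + ln (real N) / zeta2"
    by fastforce
  then show ?thesis
    unfolding totient_sum_upper_bound_def using N by simp
qed

lemma totient_sum_lower_bound_beyond_40:
  assumes N: "N \<ge> 41" and upper: "\<And>M. 1 \<le> M \<Longrightarrow> M < N \<Longrightarrow> totient_sum_upper_bound M"
  shows "totient_sum_lower_bound N"
proof -
  note bounds = kappa_zeta2_partial_bounds_beyond_40[OF N]
  have ln_Suc: "ln (real N + 1) / zeta2 \<le> ln (real N) / zeta2 + 10000 / 674409"
  proof -
    have "ln (real N + 1) - ln (real N) \<le> 1 / real N"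
      using ln_Suc_diff_eq[of N] ln_add_one_self_le_self[of "1 / real N"] N by simp
    also have "\<dots> \<le> 1 / 41"
      using N by (simp add: divide_simps)
    finally have "(ln (real N + 1) - ln (real N)) / zeta2 \<le> (1 / 41) / (16449 / 10000)"
      using zeta2_bounds N by (intro frac_le) auto
    also have "\<dots> = 10000 / 674409"
      by simp
    finally show ?thesis
      by (simp only: diff_divide_distrib)
  qed
  have tail: "4 / (real N - 3) / 5 \<le> 2 / 95"
    using N by (simp add: divide_simps)
  have "ln (real N) / zeta2 + kappa N - 4 / 5 * (zeta2_partial N - 1) - 4 / (real N - 3) / 5
      \<le> totient_sum N"
    using totient_sum_ge_of_upper_bounds[of N] upper N by auto
  with bounds(1,4) ln2_div_zeta2_bounds(1) ln_Suc tail show ?thesis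
    unfolding totient_sum_lower_bound_def by (simp only: diff_divide_distrib) argo
qed

lemma totient_sum_bounds:
  "1 \<le> N \<Longrightarrow> totient_sum_lower_bound N \<and> totient_sum_upper_bound N"
proof (induction N rule: less_induct)
  case (less N)
  show ?case
  proof (cases "N \<le> 40")
    case True
    then show ?thesis
      using less.prems totient_sum_lower_bound_upto_40 totient_sum_upper_bound_upto_40 by simp
  next
    case False
    then have "N \<ge> 41"
      by simp
    with less.IH show ?thesis
      using totient_sum_lower_bound_beyond_40 totient_sum_upper_bound_beyond_40 by simp
  qed
qed

theorem lemma2p3:
  fixes x :: real
  assumes "x \<ge> 1"
  shows "ln x / zeta2 + 1 - ln 2 / zeta2 < (\<Sum>n\<in>{1..nat \<lfloor>x\<rfloor>}. real (totient n) / (real n)^2)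
         \<and> (\<Sum>n\<in>{1..nat \<lfloor>x\<rfloor>}. real (totient n) / (real n)^2) \<le> ln x / zeta2 + 1"
proof -
  define N where "N = nat \<lfloor>x\<rfloor>"
  have N: "1 \<le> N" "real N \<le> x" "x < real N + 1"
    unfolding N_def using assms by linarith+
  have sum: "(\<Sum>n\<in>{1..nat \<lfloor>x\<rfloor>}. real (totient n) / (real n)^2) = totient_sum N"
    unfolding totient_sum_def N_def ..
  have lower: "1 + (ln (real N + 1) - ln 2) / zeta2 \<le> totient_sum N"
    and upper: "totient_sum N \<le> (if 4 \<le> N then 4 / 5 else 1) + ln (real N) / zeta2"
    using totient_sum_bounds[OF N(1)]
    unfolding totient_sum_lower_bound_def totient_sum_upper_bound_def by auto
  have "ln x / zeta2 < ln (real N + 1) / zeta2"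
    using N assms zeta2_pos by (intro divide_strict_right_mono) auto
  with lower have "ln x / zeta2 + 1 - ln 2 / zeta2 < totient_sum N"
    by (simp add: diff_divide_distrib)
  moreover have "ln (real N) / zeta2 \<le> ln x / zeta2"
    using N zeta2_pos by (intro divide_right_mono) auto
  with upper have "totient_sum N \<le> ln x / zeta2 + 1"
    by (simp split: if_splits)
  ultimately show ?thesis
    unfolding sum by simp
qed

end
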